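(* Let $(X,L)$ be a normal polarised variety and $D\subset X$ a divisor. If $(X,L)$ is K-semistable and $((X,D);L)$ is log K-stable with angle $\beta\in[0,1]$, then $((X,D);L)$ is log K-stable with angle $\gamma$ for every $\gamma$ with $\beta\le\gamma<1$.
   Context: A test configuration $(\mathcal{X},\mathcal{L})$ for a normal polarised variety $(X,L)$ is a normal variety $\mathcal{X}$ with a proper flat morphism $\pi:\mathcal{X}\to\mathbb{C}$, a $\mathbb{C}^*$-action on $\mathcal{X}$ covering the standard action on $\mathbb{C}$, and a $\mathbb{C}^*$-equivariant relatively ample line bundle $\mathcal{L}$ with $(\mathcal{X}_t,\mathcal{L}_t)\cong(X,L^r)$ for $t\ne0$ (some $r>0$). It is trivial if isomorphic to $X\times\mathbb{C}$ with trivial action on $X$. With $n=\dim X$, write $\dim H^0(\mathcal{X}_0,\mathcal{L}_0^k)=a_0k^n+a_1k^{n-1}+O(k^{n-2})$ and the total $\mathbb{C}^*$-weight on $H^0(\mathcal{X}_0,\mathcal{L}_0^k)$ as $b_0k^{n+1}+b_1k^n+O(k^{n-1})$. The Donaldson–Futaki invariant is $\mathrm{DF}=\frac{b_0a_1-b_1a_0}{a_0}$; $(X,L)$ is K-semistable if $\mathrm{DF}\ge0$ for all test configurations. Let $\mathcal{D}\subset\mathcal{X}$ be the closure of the $\mathbb{C}^*$-orbit of $D$; write $\dim H^0(\mathcal{D}_0,\mathcal{L}_0^k|_{\mathcal{D}_0})=\tilde a_0k^{n-1}+O(k^{n-2})$ and its total weight $\tilde b_0k^n+O(k^{n-1})$.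 For $0\le\beta\le1$, $\mathrm{DF}_\beta((\mathcal{X},\mathcal{D});\mathcal{L})=\frac{b_0a_1-b_1a_0}{a_0}+(1-\beta)\frac{a_0\tilde b_0-b_0\tilde a_0}{2a_0}$, and $((X,D);L)$ is log K-stable with angle $\beta$ if $\mathrm{DF}_\beta>0$ for every nontrivial test configuration. *)

theory Defs
  imports Main "HOL.Real"
begin

text \<open>We therefore model a
polarised pair ((X,D);L) abstractly by its collection of test configurations,
each of which carries the numerical invariants entering the (log) Donaldson-Futaki
invariant: the Hilbert/weight coefficients a0,a1,b0,b1 of the central fibre and
the coefficients ta0, tb0 of the central fibre of the closure of D, together with
a triviality predicate.\<close>

record tc_data =
  a0 :: real
  a1 :: real
  b0 :: real
  b1 :: real
  ta0 :: real
  tb0 :: real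

definition DF :: "tc_data \<Rightarrow> real" where
  "DF t = (b0 t * a1 t - b1 t * a0 t) / a0 t"

definition DF_log :: "real \<Rightarrow> tc_data \<Rightarrow> real" where
  "DF_log \<beta> t = (b0 t * a1 t - b1 t * a0 t) / a0 t
      + (1 - \<beta>) * ((a0 t * tb0 t - b0 t * ta0 t) / (2 * a0 t))"

definition K_semistable :: "'c set \<Rightarrow> ('c \<Rightarrow> tc_data) \<Rightarrow> bool" where
  "K_semistable TC ivt \<longleftrightarrow> (\<forall>c\<in>TC. DF (ivt c) \<ge> 0)"

definition log_K_stable ::
  "'c set \<Rightarrow> ('c \<Rightarrow> tc_data) \<Rightarrow> ('c \<Rightarrow> bool) \<Rightarrow> real \<Rightarrow> bool" where
  "log_K_stable TC ivt trivial \<beta> \<longleftrightarrow>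
     0 \<le> \<beta> \<and> \<beta> \<le> 1 \<and> (\<forall>c\<in>TC. \<not> trivial c \<longrightarrow> DF_log \<beta> (ivt c) > 0)"

end

theory Submission
  imports Defs
begin

text \<open>The log Donaldson-Futaki invariant is affine in the angle and equals the
Donaldson-Futaki invariant at angle 1. For \<open>\<beta> \<le> \<gamma> < 1\<close> the value at \<open>\<gamma>\<close> is a
convex combination of the values at \<open>\<beta>\<close> and at 1, with positive weight on the
former; hence positivity at \<open>\<beta>\<close> and nonnegativity at 1 give positivity at \<open>\<gamma>\<close>.\<close>

lemma DF_log_eq_DF_plus:
  "DF_log \<beta> t = DF t + (1 - \<beta>) * ((a0 t * tb0 t - b0 t * ta0 t) / (2 * a0 t))"
  unfolding DF_log_def DF_def ..

lemma affine_pos_between: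
  fixes D E \<beta> \<gamma> :: real
  assumes "D \<ge> 0" and "D + (1 - \<beta>) * E > 0" and "\<beta> \<le> \<gamma>" and "\<gamma> < 1"
  shows "D + (1 - \<gamma>) * E > 0"
proof -
  define t where "t = (1 - \<gamma>) / (1 - \<beta>)"
  have "1 - \<beta> > 0" using assms by simp
  then have "t > 0" "t \<le> 1" and t_scale: "t * (1 - \<beta>) = 1 - \<gamma>"
    using assms by (auto simp: t_def field_simps)
  then have "D + (1 - \<gamma>) * E = (1 - t) * D + t * (D + (1 - \<beta>) * E)"
    by (simp add: algebra_simps flip: t_scale)
  moreover have "(1 - t) * D \<ge> 0" using \<open>t \<le> 1\<close> assms(1) by simp
  moreover have "t * (D + (1 - \<beta>) * E) > 0" using \<open>t > 0\<close> assms(2) by simp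
  ultimately show ?thesis by linarith
qed

lemma DF_log_pos_mono:
  assumes "DF t \<ge> 0" and "DF_log \<beta> t > 0" and "\<beta> \<le> \<gamma>" and "\<gamma> < 1"
  shows "DF_log \<gamma> t > 0"
  using affine_pos_between[OF assms(1) _ assms(3,4)] assms(2)
  unfolding DF_log_eq_DF_plus by blast

theorem lemma2p4:
  fixes TC :: "'c set" and ivt :: "'c \<Rightarrow> tc_data" and trivial :: "'c \<Rightarrow> bool"
    and \<beta> \<gamma> :: real
  assumes "K_semistable TC ivt"
    and "log_K_stable TC ivt trivial \<beta>"
    and "\<beta> \<le> \<gamma>" and "\<gamma> < 1"
  shows "log_K_stable TC ivt trivial \<gamma>"
  using assms DF_log_pos_mono[OF _ _ assms(3,4)]
  unfolding K_semistable_def log_K_stable_def by force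

end
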